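(* Let $n\ge0$, let $\chi$ be a primitive Dirichlet character of conductor $q$ with $\gcd(q,N)=1$, let $\phi$ be a test function as in the context, and let $x>10^6$. Then $$\Big|\sum_{j\ge1}\Lambda_{\mathrm{Sym}^nf\otimes\chi}(j)\phi_x(j)-\sum_{p\nmid N}U_n(\cos\theta_p)\log(p)\chi(p)\phi_x(p)\Big|\le 9.06(n+1)\sqrt{x}+2(n+1)\log N,$$ where the second sum is over primes $p$.
   Context: $f\in S_k^{\mathrm{new}}(\Gamma_0(N))$ is a newform of even weight $k$ and squarefree level $N$. For each prime $p\nmid N$, $\theta_p\in[0,\pi]$ is defined by $a_f(p)=2p^{(k-1)/2}\cos\theta_p$. $U_n$ is the Chebyshev polynomial of the second kind: $U_n(\cos\theta)=\sin((n+1)\theta)/\sin\theta$. Twisted symmetric power $L$-function (for $\mathrm{Re}(s)>1$): $$L(s,\mathrm{Sym}^n f\otimes\chi)=\prod_{p\mid N}\big(1-(-\lambda_p p^{-1/2})^n\chi(p)p^{-s}\big)^{-1}\prod_{p\nmid N}\prod_{j=0}^{n}\big(1-e^{i(2j-n)\theta_p}\chi(p)p^{-s}\big)^{-1},$$ where $\lambda_p\in\{\pm1\}$ is the eigenvalue of the Atkin–Lehner operator $W(p)$ on $f$. The numbers $\Lambda_{\mathrm{Sym}^nf\otimes\chi}(j)$ are defined by $-\frac{L'}{L}(s,\mathrm{Sym}^nf\otimes\chi)=\sum_{j\ge1}\Lambda_{\mathrm{Sym}^nf\otimes\chi}(j)j^{-s}$ for $\mathrm{Re}(s)>1$. Test function: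 $\phi:\mathbb R\to\mathbb R$ is infinitely differentiable, $0\le\phi(t)\le 2$, with support contained in $[1/2,5/2]$; $\phi_x(t)=\phi(t/x)$. *)

theory Defs
  imports "HOL-Analysis.Analysis" "HOL-Computational_Algebra.Squarefree"
begin

text \<open>Chebyshev polynomials of the second kind, U_n(cos t) = sin((n+1)t)/sin t.\<close>
fun chebyU :: "nat \<Rightarrow> real \<Rightarrow> real" where
  "chebyU 0 y = 1"
| "chebyU (Suc 0) y = 2 * y"
| "chebyU (Suc (Suc n)) y = 2 * y * chebyU (Suc n) y - chebyU n y"

definition dirichlet_character :: "nat \<Rightarrow> (nat \<Rightarrow> complex) \<Rightarrow> bool" where
  "dirichlet_character q chi \<longleftrightarrow> q > 0 \<and>
     (\<forall>a. chi (a + q) = chi a) \<and>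
     (\<forall>a b. chi (a * b) = chi a * chi b) \<and>
     chi 1 = 1 \<and>
     (\<forall>a. chi a = 0 \<longleftrightarrow> \<not> coprime a q)"

text \<open>Primitive character of conductor q: not induced by a character of any
  smaller modulus d dividing q, i.e. for each proper divisor d of q there is
  a unit a modulo q with a = 1 mod d and chi(a) different from 1.\<close>
definition primitive_character :: "nat \<Rightarrow> (nat \<Rightarrow> complex) \<Rightarrow> bool" where
  "primitive_character q chi \<longleftrightarrow> dirichlet_character q chi \<and>
     (\<forall>d. d dvd q \<and> d < q \<longrightarrow>
        (\<exists>a. coprime a q \<and> a mod d = 1 mod d \<and> chi a \<noteq> 1))"

definition smooth_fun :: "(real \<Rightarrow> real) \<Rightarrow> bool" where
  "smooth_fun \<phi> \<longleftrightarrow> (\<exists>D :: nat \<Rightarrow> real \<Rightarrow> real. D 0 = \<phi> \<and>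
     (\<forall>k t. (D k has_real_derivative D (Suc k) t) (at t)))"

definition test_function :: "(real \<Rightarrow> real) \<Rightarrow> bool" where
  "test_function \<phi> \<longleftrightarrow> smooth_fun \<phi> \<and> (\<forall>t. 0 \<le> \<phi> t \<and> \<phi> t \<le> 2) \<and>
     (\<forall>t. t \<notin> {1/2..5/2} \<longrightarrow> \<phi> t = 0)"

text \<open>Roots of the local Euler factor of L(s, Sym^n f \<otimes> chi) at a prime p:
  for p dividing N the single root (-lambda_p p^(-1/2))^n chi(p),
  for p not dividing N the roots e^(i(2j-n)theta_p) chi(p), j = 0..n.\<close>

text \<open>Coefficients of -L'/L(s, Sym^n f \<otimes> chi) = sum_j Lambda(j) j^(-s):
  Lambda(p^m) = log p * (sum of m-th powers of the local roots at p), m \<ge> 1,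
  and Lambda(j) = 0 if j is not a prime power.\<close>
definition sym_Lambda ::
  "nat \<Rightarrow> (nat \<Rightarrow> real) \<Rightarrow> (nat \<Rightarrow> real) \<Rightarrow> nat \<Rightarrow> (nat \<Rightarrow> complex) \<Rightarrow> nat \<Rightarrow> complex" where
  "sym_Lambda N \<theta> lam n chi j =
     (if \<exists>p m. prime p \<and> m \<ge> 1 \<and> j = p ^ m then
        (let p = (THE p. prime p \<and> (\<exists>m\<ge>1. j = p ^ m));
             m = (THE m. m \<ge> 1 \<and> j = p ^ m)
         in complex_of_real (ln (real p)) *
           (if p dvd N then
              ((complex_of_real ((- lam p / sqrt (real p)) ^ n)) * chi p) ^ m
            else
              (\<Sum>i\<le>n. (cis ((2 * real i - real n) * \<theta> p) * chi p) ^ m)))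
      else 0)"

end

theory Submission
  imports Defs "HOL-Number_Theory.Prime_Powers"
begin

(*
  At a prime p not dividing N the local roots e^(i(2j-n) theta_p) chi(p) add up to
  U_n(cos theta_p) chi(p), so the two sums agree there.  Every other term is bounded by
  2 (n+1) Lambda(j), using |chi| <= 1, |lambda_p| <= 1 and 0 <= phi <= 2, and vanishes
  unless x/2 <= j <= 5x/2.  The primes dividing N contribute at most 2 (n+1) log N.  A
  proper prime power p^m, m >= 2, in the window forces p <= sqrt (5x/2), and each p has at
  most two exponents there (three for p = 2), so Chebyshev's bound
  sum_{p <= y} log p <= y log 4 bounds their contribution by
  2 (n+1) (2 sqrt (5x/2) log 4 + log 2) <= 9.06 (n+1) sqrt x once x > 10^6.
*)

section \<open>Chebyshev polynomials of the second kind\<close>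

lemma sum_power_mult_power_Suc:
  fixes z w :: "'a::comm_semiring_1"
  shows "(\<Sum>i\<le>Suc n. z ^ i * w ^ (Suc n - i)) = z ^ Suc n + w * (\<Sum>i\<le>n. z ^ i * w ^ (n - i))"
proof -
  have "(\<Sum>i\<le>n. z ^ i * w ^ (Suc n - i)) = w * (\<Sum>i\<le>n. z ^ i * w ^ (n - i))"
    by (simp add: sum_distrib_left Suc_diff_le mult_ac)
  then show ?thesis by (simp add: add.commute)
qed

lemma sum_power_mult_power_eq_chebyU:
  fixes z w :: "'a::{comm_ring_1, real_algebra_1}"
  assumes "z * w = 1" "z + w = 2 * of_real y"
  shows "(\<Sum>i\<le>n. z ^ i * w ^ (n - i)) = of_real (chebyU n y)"
  using assms
proof (induction n y rule: chebyU.induct)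
  case (3 n y)
  let ?h = "\<lambda>n. \<Sum>i\<le>n. z ^ i * w ^ (n - i)"
  have "?h (Suc (Suc n)) = z ^ Suc (Suc n) + w * ?h (Suc n)"
    by (rule sum_power_mult_power_Suc)
  also have "z ^ Suc (Suc n) = z * z ^ Suc n"
    by simp
  also have "z ^ Suc n = ?h (Suc n) - w * ?h n"
    using sum_power_mult_power_Suc [of z w n] by (simp add: eq_diff_eq)
  also have "z * (?h (Suc n) - w * ?h n) + w * ?h (Suc n) = (z + w) * ?h (Suc n) - (z * w) * ?h n"
    by (simp add: algebra_simps)
  finally show ?case
    using 3 by simp
qed (simp_all add: add.commute)

lemma sum_cis_eq_chebyU:
  "(\<Sum>i\<le>n. cis ((2 * real i - real n) * t)) = complex_of_real (chebyU n (cos t))"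
proof -
  have "cis ((2 * real i - real n) * t) = cis t ^ i * cis (- t) ^ (n - i)" if "i \<le> n" for i
  proof -
    have "cis t ^ i * cis (- t) ^ (n - i) = cis (real i * t + real (n - i) * (- t))"
      by (simp only: Complex.DeMoivre cis_mult)
    also have "real i * t + real (n - i) * (- t) = (2 * real i - real n) * t"
      using that by (simp add: of_nat_diff algebra_simps)
    finally show ?thesis ..
  qed
  then have "(\<Sum>i\<le>n. cis ((2 * real i - real n) * t)) = (\<Sum>i\<le>n. cis t ^ i * cis (- t) ^ (n - i))"
    by (intro sum.cong) auto
  also have "\<dots> = complex_of_real (chebyU n (cos t))"
    by (rule sum_power_mult_power_eq_chebyU) (simp_all add: cis_mult complex_eq_iff)
  finally show ?thesis .
qed

section \<open>Dirichlet characters and the coefficients \<open>sym_Lambda\<close>\<close>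

lemma dirichlet_character_mod:
  assumes "dirichlet_character q chi"
  shows "chi (a mod q) = chi a"
proof -
  have "chi (b + k * q) = chi b" for b k
    using assms by (induction k) (auto simp: dirichlet_character_def add.commute [of q] add.assoc [symmetric])
  then show ?thesis
    by (metis mod_div_mult_eq)
qed

lemma dirichlet_character_power:
  assumes "dirichlet_character q chi"
  shows "chi (a ^ k) = chi a ^ k"
  using assms by (induction k) (auto simp: dirichlet_character_def)

lemma norm_dirichlet_character_le_1:
  assumes "dirichlet_character q chi"
  shows "norm (chi a) \<le> 1"
proof (rule ccontr)
  assume "\<not> norm (chi a) \<le> 1"
  define B where "B = Max ((\<lambda>b. norm (chi b)) ` {..<q})"
  have "q > 0"
    using assms by (simp add: dirichlet_character_def)
  have bounded: "norm (chi b) \<le> B" for b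
  proof -
    have "norm (chi (b mod q)) \<le> B"
      unfolding B_def using \<open>q > 0\<close> by (intro Max_ge) auto
    then show ?thesis
      by (simp add: dirichlet_character_mod [OF assms])
  qed
  obtain k where "B < norm (chi a) ^ k"
    using real_arch_pow [of "norm (chi a)" B] \<open>\<not> norm (chi a) \<le> 1\<close> by auto
  also have "\<dots> = norm (chi (a ^ k))"
    by (simp add: dirichlet_character_power [OF assms] norm_power)
  finally show False
    using bounded by (simp add: not_le [symmetric])
qed

lemma sym_Lambda_prime_power:
  assumes "prime p" "m > 0"
  shows "sym_Lambda N \<theta> lam n chi (p ^ m) = of_real (ln (real p)) *
           (if p dvd N then (of_real ((- lam p / sqrt (real p)) ^ n) * chi p) ^ m
            else (\<Sum>i\<le>n. (cis ((2 * real i - real n) * \<theta> p) * chi p) ^ m))"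
proof -
  have base: "(THE p'. prime p' \<and> (\<exists>m'\<ge>1. p ^ m = p' ^ m')) = p"
  proof (rule the_equality)
    fix p' assume "prime p' \<and> (\<exists>m'\<ge>1. p ^ m = p' ^ m')"
    then show "p' = p"
      using assms prime_power_inj'(1) [of p p' m] by auto
  qed (use assms in \<open>auto intro!: exI [of _ m]\<close>)
  have exponent: "(THE m'. m' \<ge> 1 \<and> p ^ m = p ^ m') = m"
    using assms prime_power_inj [OF assms(1)] by (intro the_equality) auto
  have "\<exists>p' m'. prime p' \<and> m' \<ge> 1 \<and> p ^ m = p' ^ m'"
    using assms by (auto simp: Suc_le_eq)
  then show ?thesis
    unfolding sym_Lambda_def Let_def by (simp only: if_True base exponent)
qed

lemma sym_Lambda_eq_0_if_not_primepow:
  assumes "\<not> primepow j"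
  shows "sym_Lambda N \<theta> lam n chi j = 0"
proof -
  have "\<not> (\<exists>p m. prime p \<and> m \<ge> 1 \<and> j = p ^ m)"
    using assms unfolding primepow_def by (auto simp: Suc_le_eq)
  then show ?thesis
    unfolding sym_Lambda_def by (rule if_not_P)
qed

lemma sym_Lambda_prime_unramified:
  assumes "prime p" "\<not> p dvd N"
  shows "sym_Lambda N \<theta> lam n chi p = of_real (chebyU n (cos (\<theta> p)) * ln (real p)) * chi p"
proof -
  have "sym_Lambda N \<theta> lam n chi p = of_real (ln (real p)) * (\<Sum>i\<le>n. cis ((2 * real i - real n) * \<theta> p) * chi p)"
    using sym_Lambda_prime_power [OF assms(1), of 1] assms(2) by simp
  also have "\<dots> = of_real (ln (real p)) * (\<Sum>i\<le>n. cis ((2 * real i - real n) * \<theta> p)) * chi p"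
    by (simp add: sum_distrib_right)
  finally show ?thesis
    unfolding sum_cis_eq_chebyU by (simp add: mult_ac)
qed

lemma norm_sym_Lambda_le:
  assumes "\<And>a. norm (chi a) \<le> 1" and "\<And>p. prime p \<Longrightarrow> p dvd N \<Longrightarrow> \<bar>lam p\<bar> \<le> 1"
  shows "norm (sym_Lambda N \<theta> lam n chi j) \<le> (real n + 1) * mangoldt j"
proof (cases "primepow j")
  case True
  then obtain p m where p: "prime p" and "m > 0" and j: "j = p ^ m"
    by (auto simp: primepow_def)
  have sqrt_p: "1 \<le> sqrt (real p)"
    using prime_ge_1_nat [OF p] by simp
  have local_factor: "norm (if p dvd N then (of_real ((- lam p / sqrt (real p)) ^ n) * chi p) ^ m
      else (\<Sum>i\<le>n. (cis ((2 * real i - real n) * \<theta> p) * chi p) ^ m)) \<le> real n + 1"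
  proof (cases "p dvd N")
    case True
    have "\<bar>lam p\<bar> \<le> sqrt (real p)"
      using assms(2) [OF p True] sqrt_p by linarith
    then have "\<bar>- lam p / sqrt (real p)\<bar> \<le> 1"
      using sqrt_p by (simp add: abs_div divide_le_eq_1)
    then have "\<bar>(- lam p / sqrt (real p)) ^ n\<bar> \<le> 1"
      by (simp add: power_abs power_le_one)
    then have "norm (of_real ((- lam p / sqrt (real p)) ^ n) * chi p) \<le> 1"
      unfolding norm_mult norm_of_real using assms(1) by (intro mult_le_one) auto
    then have "norm ((of_real ((- lam p / sqrt (real p)) ^ n) * chi p) ^ m) \<le> 1"
      unfolding norm_power by (intro power_le_one) auto
    then show ?thesis
      using True by (simp only: True if_True)
  next
    case False
    have "norm (\<Sum>i\<le>n. (cis ((2 * real i - real n) * \<theta> p) * chi p) ^ m) \<le> (\<Sum>i\<le>n. 1)"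
      by (intro order_trans [OF norm_sum] sum_mono) (simp add: norm_power norm_mult power_le_one assms(1))
    then show ?thesis
      using False by simp
  qed
  have "0 \<le> ln (real p)"
    using prime_ge_1_nat [OF p] by simp
  then show ?thesis
    using mult_left_mono [OF local_factor \<open>0 \<le> ln (real p)\<close>] \<open>m > 0\<close> p j
    by (simp add: sym_Lambda_prime_power norm_mult mult.commute)
qed (simp add: sym_Lambda_eq_0_if_not_primepow mangoldt_def)

section \<open>Chebyshev's bound and prime powers in a window\<close>

lemma sum_ln_prime_divisors_le:
  fixes c :: nat
  assumes "c > 0" and "\<And>p. p \<in> A \<Longrightarrow> prime p \<and> p dvd c"
  shows "(\<Sum>p\<in>A. ln (real p)) \<le> ln (real c)"
proof -
  have "(\<Sum>p\<in>A. ln (real p)) = (\<Sum>p\<in>A. mangoldt p :: real)"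
    using assms(2) by simp
  also have "\<dots> \<le> (\<Sum>d | d dvd c. mangoldt d)"
    using assms by (intro sum_mono2 mangoldt_nonneg) auto
  also have "\<dots> = ln (real c)"
    using mangoldt_sum [of c, where 'a = real] assms(1) by simp
  finally show ?thesis .
qed

lemma binomial_odd_middle_le: "(2 * m + 1 choose m) \<le> 4 ^ m"
proof -
  have "(2 * m + 1 choose (m + 1)) = (2 * m + 1 choose m)"
    using binomial_symmetric [of m "2 * m + 1"] by simp
  then have "2 * (2 * m + 1 choose m) = (\<Sum>k\<in>{m, m + 1}. 2 * m + 1 choose k)"
    by simp
  also have "\<dots> \<le> (\<Sum>k\<le>2 * m + 1. 2 * m + 1 choose k)"
    by (rule sum_mono2) auto
  also have "\<dots> = 2 * 4 ^ m"
    unfolding choose_row_sum by (simp add: power_mult)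
  finally show ?thesis
    by simp
qed

lemma prime_dvd_binomial_odd_middle:
  assumes "prime p" "m + 1 < p" "p \<le> 2 * m + 1"
  shows "p dvd (2 * m + 1 choose m)"
proof -
  have "p dvd fact m * fact (m + 1) * (2 * m + 1 choose m)"
    using assms prime_dvd_fact_iff [of p "2 * m + 1"] binomial_fact_lemma [of m "2 * m + 1"]
    by (simp add: add.commute)
  moreover have "\<not> p dvd fact m * fact (m + 1)"
    using assms by (simp only: prime_dvd_mult_iff [OF assms(1)] prime_dvd_fact_iff [OF assms(1)]) linarith
  ultimately show ?thesis
    using assms(1) prime_dvd_mult_iff by blast
qed

lemma sum_ln_primes_between_le:
  "(\<Sum>p | prime p \<and> m + 1 < p \<and> p \<le> 2 * m + 1. ln (real p)) \<le> real m * ln 4"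
proof -
  have "(\<Sum>p | prime p \<and> m + 1 < p \<and> p \<le> 2 * m + 1. ln (real p)) \<le> ln (real (2 * m + 1 choose m))"
  proof (rule sum_ln_prime_divisors_le)
    show "prime p \<and> p dvd (2 * m + 1 choose m)" if "p \<in> {p. prime p \<and> m + 1 < p \<and> p \<le> 2 * m + 1}" for p
      using that prime_dvd_binomial_odd_middle by blast
  qed (simp add: zero_less_binomial_iff)
  also have "\<dots> \<le> ln (real (4 ^ m))"
    using binomial_odd_middle_le [of m] by (simp add: zero_less_binomial_iff)
  also have "\<dots> = real m * ln 4"
    by (simp add: ln_realpow)
  finally show ?thesis .
qed

lemma sum_ln_primes_le: "(\<Sum>p | prime p \<and> p \<le> n. ln (real p)) \<le> real n * ln 4"
proof (induction n rule: less_induct)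
  case (less n)
  consider "n \<le> 1" | "n = 2" | "n > 2" "even n" | m where "m \<ge> 1" "n = 2 * m + 1"
  proof -
    have "n \<le> 1 \<or> n = 2 \<or> (n > 2 \<and> even n) \<or> (\<exists>m\<ge>1. n = 2 * m + 1)"
      by presburger
    then show ?thesis
      using that by blast
  qed
  then show ?case
  proof cases
    case 1
    then have "{p. prime p \<and> p \<le> n} = {}"
      by (auto dest: prime_gt_1_nat)
    then show ?thesis
      by (simp del: Collect_empty_eq)
  next
    case 2
    have "{p. prime p \<and> p \<le> 2} = {2::nat}"
      by (auto simp: le_less dest: prime_gt_1_nat)
    moreover have "ln (2::real) \<le> 2 * ln 4"
    proof -
      have "ln (2::real) \<le> ln 4" "0 \<le> ln (4::real)"
        by simp_all
      then show ?thesis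
        by linarith
    qed
    ultimately show ?thesis
      unfolding 2 by simp
  next
    case 3
    then have "\<not> prime n"
      using prime_odd_nat by blast
    then have "{p. prime p \<and> p \<le> n} = {p. prime p \<and> p \<le> n - 1}"
      using 3 by (auto simp: le_diff_conv2 le_less)
    then have "(\<Sum>p | prime p \<and> p \<le> n. ln (real p)) \<le> real (n - 1) * ln 4"
      using less [of "n - 1"] 3 by simp
    also have "\<dots> \<le> real n * ln 4"
      by (intro mult_right_mono) auto
    finally show ?thesis .
  next
    case 4
    have "{p. prime p \<and> p \<le> n} =
        {p. prime p \<and> p \<le> m + 1} \<union> {p. prime p \<and> m + 1 < p \<and> p \<le> 2 * m + 1}"
      unfolding 4 by auto
    then have "(\<Sum>p | prime p \<and> p \<le> n. ln (real p)) =
        (\<Sum>p | prime p \<and> p \<le> m + 1. ln (real p)) + (\<Sum>p | prime p \<and> m + 1 < p \<and> p \<le> 2 * m + 1. ln (real p))"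
      by (simp only:) (rule sum.union_disjoint, auto)
    also have "\<dots> \<le> real (m + 1) * ln 4 + real m * ln 4"
      using less [of "m + 1"] 4 sum_ln_primes_between_le [of m] by (intro add_mono) simp_all
    also have "\<dots> = real n * ln 4"
      using 4 by (simp add: algebra_simps)
    finally show ?thesis .
  qed
qed

lemma card_exponents_in_window_le:
  fixes p :: nat and a :: real
  assumes "prime p"
  shows "card {m. a \<le> real (p ^ m) \<and> real (p ^ m) \<le> 5 * a} \<le> (if p = 2 then 3 else 2)"
proof -
  define A where "A = {m. a \<le> real (p ^ m) \<and> real (p ^ m) \<le> 5 * a}"
  define c :: nat where "c = (if p = 2 then 3 else 2)"
  have p: "2 \<le> p"
    using prime_ge_2_nat [OF assms] .
  have "5 < p ^ c"
  proof (cases "p = 2")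
    case False
    then have "3 ^ 2 \<le> p ^ 2"
      using p by (intro power_mono) auto
    then show ?thesis
      using False by (simp add: c_def)
  qed (simp add: c_def)
  have "card A \<le> c"
  proof (cases "A = {}")
    case False
    define m0 where "m0 = (LEAST m. m \<in> A)"
    have "m0 \<in> A"
      using False unfolding m0_def by (metis LeastI ex_in_conv)
    have "A \<subseteq> {m0..<m0 + c}"
    proof
      fix m assume "m \<in> A"
      then have "m0 \<le> m"
        unfolding m0_def by (rule Least_le)
      have "real (p ^ m) \<le> 5 * real (p ^ m0)"
        using \<open>m \<in> A\<close> \<open>m0 \<in> A\<close> by (simp add: A_def)
      then have "p ^ m \<le> 5 * p ^ m0"
        by (metis of_nat_le_iff of_nat_mult of_nat_numeral)
      then have "p ^ m0 * p ^ (m - m0) \<le> p ^ m0 * 5"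
        using \<open>m0 \<le> m\<close> by (simp flip: power_add add: mult.commute)
      then have "p ^ (m - m0) \<le> 5"
        using p by simp
      then have "p ^ (m - m0) < p ^ c"
        using \<open>5 < p ^ c\<close> by (rule le_less_trans)
      then have "m - m0 < c"
        using p by simp
      then show "m \<in> {m0..<m0 + c}"
        using \<open>m0 \<le> m\<close> by simp
    qed
    then show "card A \<le> c"
      using card_mono [of "{m0..<m0 + c}" A] by simp
  qed simp
  then show ?thesis
    unfolding A_def c_def .
qed

lemma finite_nat_le_real: "finite {j::nat. real j \<le> b}"
  by (rule finite_subset [of _ "{..nat \<lfloor>b\<rfloor>}"]) (auto simp: le_nat_floor)

lemma finite_exponents_le:
  fixes p :: nat and b :: real
  assumes "2 \<le> p"
  shows "finite {m. real (p ^ m) \<le> b}"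
proof (rule finite_subset)
  show "{m. real (p ^ m) \<le> b} \<subseteq> {m. real m \<le> b}"
  proof safe
    fix m assume "real (p ^ m) \<le> b"
    moreover have "m < p ^ m"
      using less_exp [of m] power_mono [of 2 p m] assms by linarith
    then have "real m < real (p ^ m)"
      by (simp only: of_nat_less_iff)
    ultimately show "real m \<le> b"
      by linarith
  qed
qed (rule finite_nat_le_real)

lemma proper_prime_powers_in_window_subset:
  fixes a :: real
  shows "{j. primepow j \<and> \<not> prime j \<and> a \<le> real j \<and> real j \<le> 5 * a} \<subseteq>
           (\<lambda>(p, m). p ^ m) ` (SIGMA p:{p. prime p \<and> p \<le> nat \<lfloor>sqrt (5 * a)\<rfloor>}.
              {m. a \<le> real (p ^ m) \<and> real (p ^ m) \<le> 5 * a})"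
proof
  fix j assume j: "j \<in> {j. primepow j \<and> \<not> prime j \<and> a \<le> real j \<and> real j \<le> 5 * a}"
  then obtain p m where p: "prime p" and "0 < m" and j_eq: "j = p ^ m"
    by (auto simp: primepow_def)
  then have "2 \<le> m"
    using j by (cases "m = 1") auto
  then have "p ^ 2 \<le> j"
    using prime_gt_0_nat [OF p] j_eq by (simp add: power_increasing)
  then have "real p ^ 2 \<le> 5 * a"
    using j by (simp flip: of_nat_power)
  then have "p \<le> nat \<lfloor>sqrt (5 * a)\<rfloor>"
    by (intro le_nat_floor real_le_rsqrt)
  then show "j \<in> (\<lambda>(p, m). p ^ m) ` (SIGMA p:{p. prime p \<and> p \<le> nat \<lfloor>sqrt (5 * a)\<rfloor>}.
                 {m. a \<le> real (p ^ m) \<and> real (p ^ m) \<le> 5 * a})"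
    using p j j_eq by (intro image_eqI [where x = "(p, m)"]) auto
qed

lemma sum_card_exponents_in_window_le:
  fixes a :: real
  assumes "\<And>p. p \<in> P \<Longrightarrow> prime p"
  shows "(\<Sum>p\<in>P. real (card {m. a \<le> real (p ^ m) \<and> real (p ^ m) \<le> 5 * a}) * ln (real p))
           \<le> 2 * (\<Sum>p\<in>P. ln (real p)) + ln 2"
proof (cases "finite P")
  case True
  have "(\<Sum>p\<in>P. real (card {m. a \<le> real (p ^ m) \<and> real (p ^ m) \<le> 5 * a}) * ln (real p))
      \<le> (\<Sum>p\<in>P. 2 * ln (real p) + (if p = 2 then ln 2 else 0))"
  proof (rule sum_mono)
    fix p assume "p \<in> P"
    then have "prime p"
      by (rule assms)
    then have "real (card {m. a \<le> real (p ^ m) \<and> real (p ^ m) \<le> 5 * a}) * ln (real p)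
        \<le> (if p = 2 then 3 else 2) * ln (real p)"
      using card_exponents_in_window_le [of p a] prime_ge_1_nat [of p]
      by (intro mult_right_mono) (auto split: if_splits)
    then show "real (card {m. a \<le> real (p ^ m) \<and> real (p ^ m) \<le> 5 * a}) * ln (real p)
        \<le> 2 * ln (real p) + (if p = 2 then ln 2 else 0)"
      by (cases "p = 2") simp_all
  qed
  also have "\<dots> \<le> 2 * (\<Sum>p\<in>P. ln (real p)) + ln 2"
    using True by (simp add: sum.distrib sum_distrib_left sum.delta)
  finally show ?thesis .
qed simp

lemma sum_mangoldt_proper_prime_powers_le:
  fixes a :: real
  assumes "0 \<le> a"
  shows "(\<Sum>j | primepow j \<and> \<not> prime j \<and> a \<le> real j \<and> real j \<le> 5 * a. mangoldt j :: real)
           \<le> 2 * sqrt (5 * a) * ln 4 + ln 2"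
proof -
  define K where "K = nat \<lfloor>sqrt (5 * a)\<rfloor>"
  define P where "P = {p. prime p \<and> p \<le> K}"
  define E where "E p = {m. a \<le> real (p ^ m) \<and> real (p ^ m) \<le> 5 * a}" for p
  have "finite P"
    by (simp add: P_def)
  have finite_E: "finite (E p)" if "p \<in> P" for p
  proof -
    have "finite {m. real (p ^ m) \<le> 5 * a}"
      using that prime_ge_2_nat by (intro finite_exponents_le) (simp add: P_def)
    then show ?thesis
      by (rule finite_subset [rotated]) (auto simp: E_def)
  qed
  have "finite (SIGMA p:P. E p)"
    using \<open>finite P\<close> finite_E by (rule finite_SigmaI)
  have "(\<Sum>j | primepow j \<and> \<not> prime j \<and> a \<le> real j \<and> real j \<le> 5 * a. mangoldt j :: real)
          \<le> (\<Sum>j\<in>(\<lambda>(p, m). p ^ m) ` (SIGMA p:P. E p). mangoldt j)"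
    using proper_prime_powers_in_window_subset [of a] \<open>finite (SIGMA p:P. E p)\<close>
    by (intro sum_mono2 mangoldt_nonneg finite_imageI) (simp_all add: P_def E_def K_def)
  also have "\<dots> \<le> (\<Sum>(p, m)\<in>(SIGMA p:P. E p). mangoldt (p ^ m))"
    using sum_image_le [of "SIGMA p:P. E p" "mangoldt :: nat \<Rightarrow> real" "\<lambda>(p, m). p ^ m"] \<open>finite (SIGMA p:P. E p)\<close>
    by (simp add: mangoldt_nonneg comp_def case_prod_unfold)
  also have "\<dots> = (\<Sum>p\<in>P. \<Sum>m\<in>E p. mangoldt (p ^ m))"
    using \<open>finite P\<close> finite_E by (subst sum.Sigma) auto
  also have "\<dots> \<le> (\<Sum>p\<in>P. \<Sum>m\<in>E p. ln (real p))"
    by (intro sum_mono) (auto simp: P_def mangoldt_primepow dest: prime_ge_1_nat)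
  also have "\<dots> = (\<Sum>p\<in>P. real (card (E p)) * ln (real p))"
    by simp
  also have "\<dots> \<le> 2 * (\<Sum>p\<in>P. ln (real p)) + ln 2"
    unfolding E_def by (rule sum_card_exponents_in_window_le) (simp add: P_def)
  also have "\<dots> \<le> 2 * (real K * ln 4) + ln 2"
    using sum_ln_primes_le [of K] by (simp add: P_def)
  also have "\<dots> \<le> 2 * sqrt (5 * a) * ln 4 + ln 2"
    using assms by (simp add: K_def)
  finally show ?thesis .
qed

lemma sum_mangoldt_window_le:
  fixes a :: real and N :: nat
  assumes "0 < N" "0 \<le> a"
  shows "(\<Sum>j | a \<le> real j \<and> real j \<le> 5 * a \<and> \<not> (prime j \<and> \<not> j dvd N). mangoldt j :: real)
           \<le> ln (real N) + 2 * sqrt (5 * a) * ln 4 + ln 2"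
proof -
  define S where "S = {j. a \<le> real j \<and> real j \<le> 5 * a \<and> \<not> (prime j \<and> \<not> j dvd N)}"
  define R where "R = {p. prime p \<and> p dvd N}"
  define H where "H = {j. primepow j \<and> \<not> prime j \<and> a \<le> real j \<and> real j \<le> 5 * a}"
  have "finite S" "finite H"
    using finite_nat_le_real [of "5 * a"] by (auto simp: S_def H_def intro: finite_subset)
  moreover have "finite R"
    using assms(1) by (auto simp: R_def intro: finite_subset [of _ "{..N}"] dvd_imp_le)
  ultimately have "(\<Sum>j\<in>S. mangoldt j :: real) = sum mangoldt (S \<inter> (R \<union> H))"
    by (intro sum.mono_neutral_right) (auto simp: S_def R_def H_def mangoldt_def)
  also have "\<dots> \<le> sum mangoldt (R \<union> H)"
    using \<open>finite R\<close> \<open>finite H\<close> by (intro sum_mono2 mangoldt_nonneg) auto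
  also have "\<dots> \<le> sum mangoldt R + sum mangoldt H"
  proof -
    have "0 \<le> (\<Sum>j\<in>R \<inter> H. mangoldt j :: real)"
      by (intro sum_nonneg mangoldt_nonneg)
    then show ?thesis
      using sum.union_inter [OF \<open>finite R\<close> \<open>finite H\<close>, of "mangoldt :: nat \<Rightarrow> real"] by linarith
  qed
  also have "sum mangoldt R \<le> ln (real N)"
    using sum_ln_prime_divisors_le [of N R] assms(1) by (simp add: R_def)
  also have "sum mangoldt H \<le> 2 * sqrt (5 * a) * ln 4 + ln 2"
    unfolding H_def by (rule sum_mangoldt_proper_prime_powers_le [OF assms(2)])
  finally show ?thesis
    by (simp add: S_def add.assoc)
qed

section \<open>The error term\<close>

lemma norm_infsum_diff_le:
  fixes F G :: "'b \<Rightarrow> 'a::real_normed_vector"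
  assumes "finite W" "U \<subseteq> A"
    and "\<And>j. j \<in> A - W \<Longrightarrow> F j = 0" and "\<And>j. j \<in> U \<Longrightarrow> G j = F j"
  shows "norm ((\<Sum>\<^sub>\<infinity>j\<in>A. F j) - (\<Sum>\<^sub>\<infinity>j\<in>U. G j)) \<le> (\<Sum>j\<in>A \<inter> W - U. norm (F j))"
proof -
  have "(\<Sum>\<^sub>\<infinity>j\<in>A. F j) = (\<Sum>\<^sub>\<infinity>j\<in>A \<inter> W. F j)"
    by (rule infsum_cong_neutral) (use assms in auto)
  also have "\<dots> = sum F (A \<inter> W)"
    using assms(1) by simp
  finally have A_sum: "(\<Sum>\<^sub>\<infinity>j\<in>A. F j) = sum F (A \<inter> W)" .
  have "(\<Sum>\<^sub>\<infinity>j\<in>U. G j) = (\<Sum>\<^sub>\<infinity>j\<in>U \<inter> W. F j)"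
    by (rule infsum_cong_neutral) (use assms in auto)
  also have "\<dots> = sum F (U \<inter> W)"
    using assms(1) by simp
  finally have U_sum: "(\<Sum>\<^sub>\<infinity>j\<in>U. G j) = sum F (U \<inter> W)" .
  have "U \<inter> W \<subseteq> A \<inter> W"
    using assms(2) by blast
  then have "sum F (A \<inter> W - U \<inter> W) = sum F (A \<inter> W) - sum F (U \<inter> W)"
    using assms(1) by (intro sum_diff) auto
  moreover have "A \<inter> W - U \<inter> W = A \<inter> W - U"
    by blast
  ultimately have "sum F (A \<inter> W) - sum F (U \<inter> W) = sum F (A \<inter> W - U)"
    by simp
  then show ?thesis
    unfolding A_sum U_sum by (simp only:) (rule norm_sum)
qed

lemma test_function_eq_0_outside_window:
  assumes "test_function \<phi>" "0 < x" "\<not> (x / 2 \<le> t \<and> t \<le> 5 * (x / 2))"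
  shows "\<phi> (t / x) = 0"
proof -
  have "t / x \<notin> {1/2..5/2}"
    using assms(2,3) by (auto simp: field_simps)
  then show ?thesis
    using assms(1) by (simp add: test_function_def)
qed

lemma ln_4_le: "ln (4::real) \<le> 1.43"
proof -
  obtain t where "exp (1.43::real) = (\<Sum>m<6. 1.43 ^ m / fact m) + exp t / fact 6 * 1.43 ^ 6"
    using Maclaurin_exp_le [of "1.43::real" 6] by blast
  moreover have "4 \<le> (\<Sum>m<6. (1.43::real) ^ m / fact m)"
    by (simp add: lessThan_nat_numeral fact_numeral eval_nat_numeral power_divide)
  moreover have "0 \<le> exp t / fact 6 * (1.43::real) ^ 6"
    by simp
  ultimately have "4 \<le> exp (1.43::real)"
    by linarith
  then have "ln 4 \<le> ln (exp (1.43::real))"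
    by (subst ln_le_cancel_iff) auto
  then show ?thesis
    by simp
qed

lemma window_bound_le_sqrt:
  fixes x :: real
  assumes "10 ^ 6 \<le> x"
  shows "2 * sqrt (5 * (x / 2)) * ln 4 + ln 2 \<le> 4.53 * sqrt x"
proof -
  have "sqrt (5 / 2) \<le> (1.5812::real)"
    by (rule real_le_lsqrt) (simp_all add: power2_eq_square)
  then have "sqrt (5 * (x / 2)) \<le> 1.5812 * sqrt x"
    using assms by (simp add: real_sqrt_mult [of "5 / 2" x, simplified] mult_right_mono)
  then have "2 * sqrt (5 * (x / 2)) * ln 4 \<le> 2 * (1.5812 * sqrt x) * 1.43"
    using assms ln_4_le by (intro mult_mono) auto
  moreover have "1000 \<le> sqrt x"
    using assms by (intro real_le_rsqrt) simp
  moreover have "ln (2::real) \<le> 1"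
    using ln_2_less_1 by simp
  ultimately show ?thesis
    by simp
qed

lemma norm_sym_Lambda_mult_test_function_le:
  assumes "dirichlet_character q chi"
    and "\<And>p. prime p \<Longrightarrow> p dvd N \<Longrightarrow> \<bar>lam p\<bar> \<le> 1"
    and "test_function \<phi>"
  shows "norm (sym_Lambda N \<theta> lam n chi j * complex_of_real (\<phi> t)) \<le> 2 * (real n + 1) * mangoldt j"
proof -
  have "norm (sym_Lambda N \<theta> lam n chi j) \<le> (real n + 1) * mangoldt j"
    using norm_dirichlet_character_le_1 [OF assms(1)] assms(2) by (rule norm_sym_Lambda_le)
  moreover have "\<bar>\<phi> t\<bar> \<le> 2"
    using assms(3) by (simp add: test_function_def)
  ultimately have "norm (sym_Lambda N \<theta> lam n chi j) * \<bar>\<phi> t\<bar> \<le> (real n + 1) * mangoldt j * 2"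
    by (intro mult_mono) (simp_all add: mangoldt_nonneg)
  then show ?thesis
    by (simp add: norm_mult mult_ac)
qed

lemma norm_sum_sym_Lambda_diff_le_sum_mangoldt:
  fixes x :: real
  assumes "dirichlet_character q chi"
    and "\<And>p. prime p \<Longrightarrow> p dvd N \<Longrightarrow> \<bar>lam p\<bar> \<le> 1"
    and "test_function \<phi>" and "0 < x"
  shows "cmod ((\<Sum>\<^sub>\<infinity>j\<in>{1::nat..}. sym_Lambda N \<theta> lam n chi j * complex_of_real (\<phi> (real j / x)))
            - (\<Sum>\<^sub>\<infinity>p\<in>{p::nat. prime p \<and> \<not> p dvd N}.
                 complex_of_real (chebyU n (cos (\<theta> p)) * ln (real p)) * chi p
                 * complex_of_real (\<phi> (real p / x))))
         \<le> 2 * (real n + 1) *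
           (\<Sum>j | x / 2 \<le> real j \<and> real j \<le> 5 * (x / 2) \<and> \<not> (prime j \<and> \<not> j dvd N). mangoldt j)"
proof -
  define F where "F = (\<lambda>j. sym_Lambda N \<theta> lam n chi j * complex_of_real (\<phi> (real j / x)))"
  define G where "G = (\<lambda>p. complex_of_real (chebyU n (cos (\<theta> p)) * ln (real p)) * chi p
                 * complex_of_real (\<phi> (real p / x)))"
  define U where "U = {p::nat. prime p \<and> \<not> p dvd N}"
  define W where "W = {j::nat. x / 2 \<le> real j \<and> real j \<le> 5 * (x / 2)}"
  have "finite W"
    using finite_nat_le_real [of "5 * (x / 2)"] by (rule finite_subset [rotated]) (auto simp: W_def)
  have "cmod ((\<Sum>\<^sub>\<infinity>j\<in>{1..}. F j) - (\<Sum>\<^sub>\<infinity>p\<in>U. G p)) \<le> (\<Sum>j\<in>{1..} \<inter> W - U. norm (F j))"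
  proof (rule norm_infsum_diff_le)
    show "F j = 0" if "j \<in> {1..} - W" for j
      using that test_function_eq_0_outside_window [OF assms(3,4)] by (simp add: F_def W_def)
    show "G p = F p" if "p \<in> U" for p
      using that by (simp add: F_def G_def U_def sym_Lambda_prime_unramified)
  qed (use \<open>finite W\<close> in \<open>auto simp: U_def dest: prime_gt_0_nat\<close>)
  also have "\<dots> \<le> (\<Sum>j\<in>W - U. norm (F j))"
    using \<open>finite W\<close> by (intro sum_mono2) auto
  also have "\<dots> \<le> (\<Sum>j\<in>W - U. 2 * (real n + 1) * mangoldt j)"
    unfolding F_def using assms(1-3) by (intro sum_mono norm_sym_Lambda_mult_test_function_le)
  also have "\<dots> = 2 * (real n + 1) *
      (\<Sum>j | x / 2 \<le> real j \<and> real j \<le> 5 * (x / 2) \<and> \<not> (prime j \<and> \<not> j dvd N). mangoldt j)"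
    by (simp add: sum_distrib_left W_def U_def set_diff_eq)
  finally show ?thesis
    by (simp only: F_def G_def U_def)
qed

theorem mainTheorem8:
  fixes N :: nat and \<theta> :: "nat \<Rightarrow> real" and lam :: "nat \<Rightarrow> real"
    and n q :: nat and chi :: "nat \<Rightarrow> complex" and \<phi> :: "real \<Rightarrow> real" and x :: real
  assumes "N > 0" and "squarefree N"
    and "\<And>p. prime p \<Longrightarrow> \<not> p dvd N \<Longrightarrow> 0 \<le> \<theta> p \<and> \<theta> p \<le> pi"
    and "\<And>p. prime p \<Longrightarrow> p dvd N \<Longrightarrow> lam p = 1 \<or> lam p = -1"
    and "primitive_character q chi" and "coprime q N"
    and "test_function \<phi>"
    and "x > 10 ^ 6"
  shows "cmod ((\<Sum>\<^sub>\<infinity>j\<in>{1::nat..}. sym_Lambda N \<theta> lam n chi j * complex_of_real (\<phi> (real j / x)))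
            - (\<Sum>\<^sub>\<infinity>p\<in>{p::nat. prime p \<and> \<not> p dvd N}.
                 complex_of_real (chebyU n (cos (\<theta> p)) * ln (real p)) * chi p
                 * complex_of_real (\<phi> (real p / x))))
         \<le> 9.06 * (real n + 1) * sqrt x + 2 * (real n + 1) * ln (real N)"
proof -
  \<comment> \<open>Only \<open>|chi| \<le> 1\<close>, \<open>|lam p| \<le> 1\<close> and the bounds and support of \<open>\<phi>\<close> matter.\<close>
  have character: "dirichlet_character q chi"
    using assms(5) by (simp add: primitive_character_def)
  have lam_bounded: "\<bar>lam p\<bar> \<le> 1" if "prime p" "p dvd N" for p
    using assms(4) [OF that] by auto
  have "0 < x"
    using assms(8) by simp
  have "2 * (real n + 1) *
      (\<Sum>j | x / 2 \<le> real j \<and> real j \<le> 5 * (x / 2) \<and> \<not> (prime j \<and> \<not> j dvd N). mangoldt j)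
      \<le> 2 * (real n + 1) * (ln (real N) + 2 * sqrt (5 * (x / 2)) * ln 4 + ln 2)"
    using assms(1) \<open>0 < x\<close> by (intro mult_left_mono sum_mangoldt_window_le) auto
  also have "\<dots> \<le> 2 * (real n + 1) * (ln (real N) + 4.53 * sqrt x)"
    using window_bound_le_sqrt assms(8) by (intro mult_left_mono) auto
  also have "\<dots> = 9.06 * (real n + 1) * sqrt x + 2 * (real n + 1) * ln (real N)"
    by (simp add: algebra_simps)
  finally show ?thesis
    using norm_sum_sym_Lambda_diff_le_sum_mangoldt [OF character lam_bounded assms(7) \<open>0 < x\<close>] by (rule order_trans [rotated])
qed

end
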